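(* Consider AdaFTRL with $1/2$-Tsallis entropy for $K$-armed bandits relying on a known upper bound $M$ on the payoffs (described in the context). For all $m\in\mathbb{R}$ with $m\le M$, all oblivious sequences $y_1,y_2,\dots$ in $[m,M]^K$ and all $T\ge1$, \[ R_T(y_{1:T})\le 4(M-m)\sqrt{KT}+2(M-m). \]
   Context: Oblivious adversarial $K$-armed bandits ($K\ge2$): reward vectors $y_t\in[m,M]^K$ fixed beforehand; at round $t$ the player draws $A_t\sim p_t$ and observes only $y_{t,A_t}$; $R_T(y_{1:T})=\max_a\sum_{t=1}^Ty_{t,a}-\mathbb{E}[\sum_{t=1}^Ty_{t,A_t}]$. The player knows $M$ but not $m$. Let $\mathcal{S}$ be the probability simplex over $[K]$, $H_{1/2}(p)=-\sum_{a=1}^K2\sqrt{p_a}$ (for $p\in[0,\infty)^K$), and for $q$ with all $q_a>0$, $B(p,q)=H_{1/2}(p)-H_{1/2}(q)-\langle\nabla H_{1/2}(q),p-q\rangle=\sum_a(\sqrt{p_a}-\sqrt{q_a})^2/\sqrt{q_a}$. Algorithm (input $M$): $\eta_1=+\infty$, $p_1=(1/K,\dots,1/K)$. For $t\ge1$: draw $A_t\sim p_t$; observe $y_{t,A_t}$; set $\widehat y_{t,a}=\frac{y_{t,a}-M}{p_{t,a}}\mathbf{1}\{A_t=a\}+M$; compute $\delta_t=\max_{p\in\mathcal{S}}\{\langle p_t-p,-\widehat y_t\rangle-B(p,p_t)/\eta_t\}$ (with the convention $B(p,p_t)/\eta_t=0$ when $\eta_t=+\infty$); set $\eta_{t+1}=2(\sqrt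 K-1)/\sum_{s=1}^t\delta_s$; set $p_{t+1}\in\arg\min_{p\in\mathcal{S}}\bigl\{-\sum_{a}p_a\sum_{s=1}^t\widehat y_{s,a}-\frac1{\eta_{t+1}}\sum_a2\sqrt{p_a}\bigr\}$. *)

theory Defs
  imports Complex_Main
begin

text \<open>Arms are 0..K-1; rounds are 1,2,...; a reward sequence is y :: nat => nat => real
  with y t a the reward of arm a at round t.  A history is the list of actions played so far:
  h ! (s-1) = A_s.  A policy P maps a history of length t-1 to the distribution p_t.\<close>

definition simplex :: "nat \<Rightarrow> (nat \<Rightarrow> real) set" where
  "simplex K = {p. (\<forall>a<K. 0 \<le> p a) \<and> (\<Sum>a<K. p a) = 1}"

text \<open>Bregman divergence of the 1/2-Tsallis entropy H(p) = - sum 2 sqrt(p_a).\<close>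
definition bregH :: "nat \<Rightarrow> (nat \<Rightarrow> real) \<Rightarrow> (nat \<Rightarrow> real) \<Rightarrow> real" where
  "bregH K p q = (\<Sum>a<K. (sqrt (p a) - sqrt (q a))^2 / sqrt (q a))"

text \<open>Importance-weighted estimate at round s (1 \<le> s \<le> length h).\<close>
definition yhat :: "(nat list \<Rightarrow> nat \<Rightarrow> real) \<Rightarrow> real \<Rightarrow> (nat \<Rightarrow> nat \<Rightarrow> real)
    \<Rightarrow> nat list \<Rightarrow> nat \<Rightarrow> nat \<Rightarrow> real" where
  "yhat P M y h s a =
     (if a = h ! (s - 1) then (y s a - M) / P (take (s - 1) h) a else 0) + M"

text \<open>delta_t for a history h of length t \<ge> 1, given lam = 1/eta_t
  (lam = 0 encodes eta_t = +infinity, matching the convention B/eta = 0).\<close>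
definition deltaL :: "(nat list \<Rightarrow> nat \<Rightarrow> real) \<Rightarrow> nat \<Rightarrow> real \<Rightarrow> (nat \<Rightarrow> nat \<Rightarrow> real)
    \<Rightarrow> real \<Rightarrow> nat list \<Rightarrow> real" where
  "deltaL P K M y lam h =
     (SUP q\<in>simplex K. (\<Sum>a<K. (P (butlast h) a - q a) * (- yhat P M y h (length h) a))
        - lam * bregH K q (P (butlast h)))"

text \<open>invlr P K M y h t = 1/eta_{t+1} = (sum_{s=1}^t delta_s) / (2(sqrt K - 1)).\<close>
primrec invlr :: "(nat list \<Rightarrow> nat \<Rightarrow> real) \<Rightarrow> nat \<Rightarrow> real \<Rightarrow> (nat \<Rightarrow> nat \<Rightarrow> real)
    \<Rightarrow> nat list \<Rightarrow> nat \<Rightarrow> real" where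
  "invlr P K M y h 0 = 0"
| "invlr P K M y h (Suc t) = invlr P K M y h t
     + deltaL P K M y (invlr P K M y h t) (take (Suc t) h) / (2 * (sqrt (real K) - 1))"

text \<open>FTRL objective defining p_{t+1} after history h of length t.\<close>
definition ftrl_obj :: "(nat list \<Rightarrow> nat \<Rightarrow> real) \<Rightarrow> nat \<Rightarrow> real \<Rightarrow> (nat \<Rightarrow> nat \<Rightarrow> real)
    \<Rightarrow> nat list \<Rightarrow> (nat \<Rightarrow> real) \<Rightarrow> real" where
  "ftrl_obj P K M y h q =
     - (\<Sum>a<K. q a * (\<Sum>s=1..length h. yhat P M y h s a))
     - invlr P K M y h (length h) * (\<Sum>a<K. 2 * sqrt (q a))"

text \<open>P is a run of AdaFTRL with 1/2-Tsallis entropy (any tie-breaking in the argmin).\<close>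
definition adaftrl :: "(nat list \<Rightarrow> nat \<Rightarrow> real) \<Rightarrow> nat \<Rightarrow> real \<Rightarrow> (nat \<Rightarrow> nat \<Rightarrow> real) \<Rightarrow> bool" where
  "adaftrl P K M y \<longleftrightarrow>
     (\<forall>a<K. P [] a = 1 / real K) \<and>
     (\<forall>h. set h \<subseteq> {..<K} \<and> length h \<ge> 1 \<longrightarrow>
        P h \<in> simplex K \<and> (\<forall>q\<in>simplex K. ftrl_obj P K M y h (P h) \<le> ftrl_obj P K M y h q))"

definition histories :: "nat \<Rightarrow> nat \<Rightarrow> nat list set" where
  "histories K T = {h. length h = T \<and> set h \<subseteq> {..<K}}"

text \<open>E[sum_{t=1}^T y_{t,A_t}] where A_{s+1} ~ P (take s h).\<close>
definition exp_reward :: "(nat list \<Rightarrow> nat \<Rightarrow> real) \<Rightarrow> nat \<Rightarrow> (nat \<Rightarrow> nat \<Rightarrow> real) \<Rightarrow> nat \<Rightarrow> real" where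
  "exp_reward P K y T =
     (\<Sum>h\<in>histories K T. (\<Prod>s<T. P (take s h) (h ! s)) * (\<Sum>s<T. y (Suc s) (h ! s)))"

definition regret :: "(nat list \<Rightarrow> nat \<Rightarrow> real) \<Rightarrow> nat \<Rightarrow> (nat \<Rightarrow> nat \<Rightarrow> real) \<Rightarrow> nat \<Rightarrow> real" where
  "regret P K y T = (MAX a\<in>{..<K}. (\<Sum>t=1..T. y t a)) - exp_reward P K y T"

end

theory Submission
  imports Defs "HOL-Analysis.Convex"
begin

(*
  Along every history, the estimates yhat_t and the iterates p_t form a run of FTRL with the
  1/2-Tsallis regularizer and nondecreasing inverse learning rates lam_t = 1/eta_t.  First-order
  optimality strengthens the minimality of p_t by the Bregman divergence, so the potential
  min F_t + 2 sqrt K lam_t, which only gains when lam_t grows, bounds the regret against the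
  estimates by 2 (sqrt K - 1) lam_(T+1) + sum_t delta_t = 2 sum_t delta_t.
  Each delta_t lies in [0, M - m] and lam_t delta_t is at most the local norm
  sum_a p_(t,a)^(3/2) (M - yhat_(t,a))^2.  As 2 (sqrt K - 1) lam_t = sum_(s<t) delta_s, this makes
  the delta's self-bounding: sum_t delta_t <= (M - m) + sqrt (4 (sqrt K - 1) sum_t local norm_t).
  In expectation the estimates dominate the rewards and are exact on the played arm, each local
  norm is at most (M - m)^2 sum_a sqrt p_(t,a) <= (M - m)^2 sqrt K, and E sqrt <= sqrt E.
*)

lemma simplex_nonneg: "p \<in> simplex K \<Longrightarrow> a < K \<Longrightarrow> 0 \<le> p a"
  by (simp add: simplex_def)

lemma simplex_sum: "p \<in> simplex K \<Longrightarrow> (\<Sum>a<K. p a) = 1"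
  by (simp add: simplex_def)

lemma vertex_in_simplex: "u < K \<Longrightarrow> (\<lambda>a. if a = u then 1 else 0) \<in> simplex K"
  by (simp add: simplex_def)

lemma simplex_segment:
  assumes p: "p \<in> simplex K" and q: "q \<in> simplex K" and e: "0 \<le> e" "e \<le> 1"
  shows "(\<lambda>a. p a + e * (q a - p a)) \<in> simplex K"
proof -
  have "0 \<le> p a + e * (q a - p a)" if "a < K" for a
  proof -
    have "0 \<le> (1 - e) * p a + e * q a"
      using e simplex_nonneg[OF p that] simplex_nonneg[OF q that] by simp
    thus ?thesis by (simp add: algebra_simps)
  qed
  moreover have "(\<Sum>a<K. p a + e * (q a - p a)) = 1"
    using simplex_sum[OF p] simplex_sum[OF q]
    by (simp add: sum.distrib sum_subtractf flip: sum_distrib_left)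
  ultimately show ?thesis by (simp add: simplex_def)
qed

lemma sum_sqrt_simplex_le:
  assumes p: "p \<in> simplex K"
  shows "(\<Sum>a<K. sqrt (p a)) \<le> sqrt (real K)"
proof (rule real_le_rsqrt)
  have "(\<Sum>a<K. sqrt (p a))\<^sup>2 \<le> (\<Sum>a<K. (sqrt (p a))\<^sup>2) * card {..<K}"
    by (rule sum_squared_le_sum_of_squares)
  also have "(\<Sum>a<K. (sqrt (p a))\<^sup>2) = (\<Sum>a<K. p a)"
    by (rule sum.cong) (simp_all add: simplex_nonneg[OF p])
  finally show "(\<Sum>a<K. sqrt (p a))\<^sup>2 \<le> real K" by (simp add: simplex_sum[OF p])
qed

lemma simplex_diff_sum_shift:
  assumes "p \<in> simplex K" "q \<in> simplex K"
  shows "(\<Sum>a<K. (p a - q a) * (c - Y a)) = (\<Sum>a<K. (p a - q a) * (- Y a))"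
proof -
  have "(\<Sum>a<K. (p a - q a) * (c - Y a))
      = c * ((\<Sum>a<K. p a) - (\<Sum>a<K. q a)) + (\<Sum>a<K. (p a - q a) * (- Y a))"
    by (simp add: algebra_simps sum.distrib sum_subtractf sum_distrib_left)
  thus ?thesis using assms by (simp add: simplex_sum)
qed

lemma bregH_nonneg: "(\<And>a. a < K \<Longrightarrow> 0 \<le> p a) \<Longrightarrow> 0 \<le> bregH K q p"
  unfolding bregH_def by (auto intro!: sum_nonneg divide_nonneg_nonneg)

lemma bregH_self [simp]: "bregH K p p = 0"
  unfolding bregH_def by simp

section \<open>Minimizers of Tsallis-regularized linear objectives\<close>

definition tsallis_obj :: "nat \<Rightarrow> (nat \<Rightarrow> real) \<Rightarrow> real \<Rightarrow> (nat \<Rightarrow> real) \<Rightarrow> real" where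
  "tsallis_obj K L lam q = - (\<Sum>a<K. q a * L a) - 2 * lam * (\<Sum>a<K. sqrt (q a))"

lemma exists_linear_lt_sqrt:
  fixes c lam :: real
  assumes lam: "0 < lam"
  obtains e where "0 < e" "e \<le> 1" "e * c < lam * sqrt e"
proof -
  define r where "r = lam / (\<bar>c\<bar> + 1)"
  define e where "e = min 1 (r\<^sup>2)"
  have r: "0 < r" "r * \<bar>c\<bar> < lam"
    using lam by (auto simp: r_def field_simps)
  have e: "0 < e" "e \<le> 1" using r by (auto simp: e_def)
  have "e * c \<le> sqrt e * (sqrt e * \<bar>c\<bar>)"
    using e by (simp add: mult.assoc[symmetric] abs_ge_self)
  also have "\<dots> \<le> sqrt e * (r * \<bar>c\<bar>)"
    using r e by (intro mult_left_mono mult_right_mono) (auto simp: e_def real_le_lsqrt)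
  also have "\<dots> < sqrt e * lam"
    using r e by (intro mult_strict_left_mono) auto
  finally show ?thesis using that e by (simp add: ac_simps)
qed

lemma sum_sqrt_toward_vertex_ge:
  assumes p: "p \<in> simplex K" and a: "a < K" "p a = 0" and e: "0 \<le> e" "e \<le> 1"
  shows "(1 - e) * (\<Sum>b<K. sqrt (p b)) + sqrt e
      \<le> (\<Sum>b<K. sqrt (p b + e * ((if b = a then 1 else 0) - p b)))"
proof -
  have "(1 - e) * sqrt (p b) + (if b = a then sqrt e else 0)
      \<le> sqrt (p b + e * ((if b = a then 1 else 0) - p b))" if b: "b < K" for b
  proof (cases "b = a")
    case False
    have "1 - e \<le> sqrt (1 - e)"
      using e by (intro real_le_rsqrt) (simp add: power2_eq_square mult_left_le_one_le)
    hence "(1 - e) * sqrt (p b) \<le> sqrt (1 - e) * sqrt (p b)"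
      using simplex_nonneg[OF p b] by (intro mult_right_mono) auto
    moreover have "p b + e * ((if b = a then 1 else 0) - p b) = (1 - e) * p b"
      using False by (simp add: algebra_simps)
    ultimately show ?thesis using False by (simp add: real_sqrt_mult)
  qed (simp add: a)
  hence "(\<Sum>b<K. (1 - e) * sqrt (p b) + (if b = a then sqrt e else 0))
      \<le> (\<Sum>b<K. sqrt (p b + e * ((if b = a then 1 else 0) - p b)))"
    by (intro sum_mono) simp
  thus ?thesis using a by (simp add: sum.distrib flip: sum_distrib_left)
qed

(* Moving mass e to a coordinate with p a = 0 changes the linear part by O(e) but gains sqrt e
  in the regularizer. *)
lemma tsallis_minimizer_pos:
  assumes p: "p \<in> simplex K" and min: "\<forall>q\<in>simplex K. tsallis_obj K L lam p \<le> tsallis_obj K L lam q"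
    and lam: "0 < lam" and a: "a < K"
  shows "0 < p a"
proof (rule ccontr)
  assume "\<not> 0 < p a"
  hence pa: "p a = 0" using simplex_nonneg[OF p a] by simp
  define S where "S = (\<Sum>b<K. sqrt (p b))"
  define c where "c = (\<Sum>b<K. p b * L b) - L a + 2 * lam * S"
  obtain e where e: "0 < e" "e \<le> 1" and small: "e * c < 2 * lam * sqrt e"
    using exists_linear_lt_sqrt[of "2 * lam" c] lam by auto
  define x where "x b = p b + e * ((if b = a then 1 else 0) - p b)" for b
  have x: "x \<in> simplex K"
    unfolding x_def using simplex_segment[OF p vertex_in_simplex[OF a]] e by simp
  have "(\<Sum>b<K. x b * L b) = (\<Sum>b<K. (1 - e) * (p b * L b) + (if b = a then e * L a else 0))"
    by (rule sum.cong) (auto simp: x_def pa algebra_simps)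
  hence lin: "(\<Sum>b<K. x b * L b) = (1 - e) * (\<Sum>b<K. p b * L b) + e * L a"
    using a by (simp add: sum.distrib flip: sum_distrib_left)
  have sq: "(1 - e) * S + sqrt e \<le> (\<Sum>b<K. sqrt (x b))"
    unfolding S_def x_def using sum_sqrt_toward_vertex_ge[OF p a pa] e by simp
  have "tsallis_obj K L lam x
      \<le> - ((1 - e) * (\<Sum>b<K. p b * L b) + e * L a) - 2 * lam * ((1 - e) * S + sqrt e)"
    using sq lam by (simp add: tsallis_obj_def lin)
  also have "\<dots> = tsallis_obj K L lam p + (e * c - 2 * lam * sqrt e)"
    by (simp add: tsallis_obj_def c_def S_def algebra_simps)
  finally have "tsallis_obj K L lam x < tsallis_obj K L lam p" using small by linarith
  thus False using min x by fastforce
qed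

lemma nonneg_if_ge_neg_small:
  fixes d C :: real
  assumes "\<And>e. 0 < e \<Longrightarrow> e \<le> 1 \<Longrightarrow> - (e * C) \<le> d"
  shows "0 \<le> d"
proof (rule field_le_epsilon)
  fix eps :: real assume eps: "0 < eps"
  define e where "e = min 1 (eps / (\<bar>C\<bar> + 1))"
  have e: "0 < e" "e \<le> 1" using eps by (auto simp: e_def)
  have "e * C \<le> e * \<bar>C\<bar>" using e by (intro mult_left_mono) auto
  also have "\<dots> \<le> eps / (\<bar>C\<bar> + 1) * \<bar>C\<bar>" by (intro mult_right_mono) (auto simp: e_def)
  also have "\<dots> \<le> eps" using eps by (simp add: field_simps)
  finally show "0 \<le> d + eps" using assms[OF e] by linarith
qed

lemma sqrt_diff_sq_div_le:
  fixes x p :: real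
  assumes "0 \<le> x" "0 < p"
  shows "(sqrt x - sqrt p)\<^sup>2 / sqrt p \<le> (x - p)\<^sup>2 / (p * sqrt p)"
proof -
  have "(sqrt x - sqrt p)\<^sup>2 * (sqrt x + sqrt p)\<^sup>2 = (x - p)\<^sup>2"
    using assms by (simp flip: power_mult_distrib add: algebra_simps)
  moreover have "p \<le> (sqrt x + sqrt p)\<^sup>2"
    using assms power_mono[of "sqrt p" "sqrt x + sqrt p" 2] by simp
  ultimately have "(sqrt x - sqrt p)\<^sup>2 * p \<le> (x - p)\<^sup>2"
    by (metis mult_left_mono zero_le_power2)
  thus ?thesis using assms by (simp add: field_simps)
qed

lemma tsallis_obj_diff_bregH:
  assumes p: "\<And>a. a < K \<Longrightarrow> 0 < p a" and x: "\<And>a. a < K \<Longrightarrow> 0 \<le> x a"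
  shows "tsallis_obj K L lam x - tsallis_obj K L lam p - lam * bregH K x p
       = (\<Sum>a<K. (x a - p a) * (- L a - lam / sqrt (p a)))"
proof -
  have "tsallis_obj K L lam x - tsallis_obj K L lam p - lam * bregH K x p
      = (\<Sum>a<K. (p a - x a) * L a + 2 * lam * (sqrt (p a) - sqrt (x a))
                - lam * ((sqrt (x a) - sqrt (p a))\<^sup>2 / sqrt (p a)))"
    by (simp add: tsallis_obj_def bregH_def algebra_simps sum_subtractf sum.distrib
        sum_distrib_left)
  also have "\<dots> = (\<Sum>a<K. (x a - p a) * (- L a - lam / sqrt (p a)))"
  proof (rule sum.cong)
    fix a assume "a \<in> {..<K}"
    hence "0 < p a" "0 \<le> x a" using p x by auto
    hence "0 < sqrt (p a)" "(sqrt (p a))\<^sup>2 = p a" "(sqrt (x a))\<^sup>2 = x a"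
      by simp_all
    thus "(p a - x a) * L a + 2 * lam * (sqrt (p a) - sqrt (x a))
        - lam * ((sqrt (x a) - sqrt (p a))\<^sup>2 / sqrt (p a))
        = (x a - p a) * (- L a - lam / sqrt (p a))"
      by (simp add: field_simps power2_eq_square)
  qed simp
  finally show ?thesis .
qed

lemma tsallis_obj_segment_le:
  assumes p: "p \<in> simplex K" and pos: "\<And>a. a < K \<Longrightarrow> 0 < p a" and q: "q \<in> simplex K"
    and lam: "0 \<le> lam" and e: "0 \<le> e" "e \<le> 1"
  shows "tsallis_obj K L lam (\<lambda>a. p a + e * (q a - p a)) - tsallis_obj K L lam p
      \<le> e * (\<Sum>a<K. (q a - p a) * (- L a - lam / sqrt (p a)))
        + e\<^sup>2 * (lam * (\<Sum>a<K. (q a - p a)\<^sup>2 / (p a * sqrt (p a))))"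
proof -
  define x where "x = (\<lambda>a. p a + e * (q a - p a))"
  have x: "x \<in> simplex K"
    unfolding x_def using simplex_segment[OF p q] e by simp
  have "bregH K x p \<le> (\<Sum>a<K. (x a - p a)\<^sup>2 / (p a * sqrt (p a)))"
    unfolding bregH_def
    by (intro sum_mono sqrt_diff_sq_div_le) (simp_all add: pos simplex_nonneg[OF x])
  also have "\<dots> = e\<^sup>2 * (\<Sum>a<K. (q a - p a)\<^sup>2 / (p a * sqrt (p a)))"
    by (simp add: x_def power_mult_distrib sum_distrib_left)
  finally have "lam * bregH K x p \<le> e\<^sup>2 * (lam * (\<Sum>a<K. (q a - p a)\<^sup>2 / (p a * sqrt (p a))))"
    using lam by (metis mult_left_mono mult.left_commute)
  moreover have "tsallis_obj K L lam x - tsallis_obj K L lam p - lam * bregH K x p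
      = (\<Sum>a<K. (x a - p a) * (- L a - lam / sqrt (p a)))"
    by (rule tsallis_obj_diff_bregH) (use pos simplex_nonneg[OF x] in auto)
  moreover have "(\<Sum>a<K. (x a - p a) * (- L a - lam / sqrt (p a)))
      = e * (\<Sum>a<K. (q a - p a) * (- L a - lam / sqrt (p a)))"
    by (simp add: x_def sum_distrib_left mult.assoc)
  ultimately show ?thesis unfolding x_def by linarith
qed

(* The objective minus lam B(., p) is affine; minimality of p along segments towards q, where the
  Bregman term is O(e^2), makes its slope nonnegative. *)
lemma tsallis_minimizer_bregman:
  assumes p: "p \<in> simplex K" and min: "\<forall>q\<in>simplex K. tsallis_obj K L lam p \<le> tsallis_obj K L lam q"
    and lam: "0 \<le> lam" and q: "q \<in> simplex K"
  shows "tsallis_obj K L lam p + lam * bregH K q p \<le> tsallis_obj K L lam q"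
proof (cases "lam = 0")
  case True
  thus ?thesis using min q by simp
next
  case False
  hence pos: "\<And>a. a < K \<Longrightarrow> 0 < p a"
    using tsallis_minimizer_pos[OF p min] lam by simp
  define d where "d = (\<Sum>a<K. (q a - p a) * (- L a - lam / sqrt (p a)))"
  define C where "C = lam * (\<Sum>a<K. (q a - p a)\<^sup>2 / (p a * sqrt (p a)))"
  have "0 \<le> d"
  proof (rule nonneg_if_ge_neg_small)
    fix e :: real assume e: "0 < e" "e \<le> 1"
    have "0 \<le> tsallis_obj K L lam (\<lambda>a. p a + e * (q a - p a)) - tsallis_obj K L lam p"
      using min simplex_segment[OF p q] e by simp
    also have "\<dots> \<le> e * (d + e * C)"
      using tsallis_obj_segment_le[OF p pos q lam] e
      by (simp add: d_def C_def power2_eq_square algebra_simps)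
    finally show "- (e * C) \<le> d" using e by (simp add: zero_le_mult_iff)
  qed
  moreover have "tsallis_obj K L lam q - tsallis_obj K L lam p - lam * bregH K q p = d"
    unfolding d_def by (rule tsallis_obj_diff_bregH) (use pos simplex_nonneg[OF q] in auto)
  ultimately show ?thesis by simp
qed

section \<open>The stability term\<close>

lemma local_norm_coord_bound:
  fixes p q l lam :: real
  assumes p: "0 \<le> p" and q: "0 \<le> q" and l: "0 \<le> l" and lam: "0 < lam"
  shows "lam * ((p - q) * l) - lam\<^sup>2 * ((sqrt q - sqrt p)\<^sup>2 / sqrt p) \<le> p * sqrt p * l\<^sup>2"
proof (cases "p = 0")
  case True
  thus ?thesis using q l lam by simp
next
  case False
  define s where "s = sqrt p"
  define x where "x = sqrt q"
  have s: "0 < s" "p = s\<^sup>2" and x: "0 \<le> x" "q = x\<^sup>2"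
    using p q False by (auto simp: s_def x_def)
  define u where "u = lam * (s - x)"
  have lhs: "lam * ((p - q) * l) - lam\<^sup>2 * ((sqrt q - sqrt p)\<^sup>2 / sqrt p)
      = l * u * (s + x) - u\<^sup>2 / s"
    unfolding s_def[symmetric] x_def[symmetric] u_def using s x
    by (simp add: power2_eq_square algebra_simps)
  have rhs: "p * sqrt p * l\<^sup>2 = s ^ 3 * l\<^sup>2"
    unfolding s_def[symmetric] using s by (simp add: power2_eq_square power3_eq_cube)
  show ?thesis
  proof (cases "s \<le> x")
    case True
    hence "l * u * (s + x) \<le> 0"
      using s x l lam by (simp add: u_def mult_nonneg_nonpos mult_nonpos_nonneg)
    moreover have "0 \<le> u\<^sup>2 / s" "0 \<le> s ^ 3 * l\<^sup>2" using s by auto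
    ultimately show ?thesis unfolding lhs rhs by linarith
  next
    case False
    hence "l * u * (s + x) \<le> l * u * (2 * s)"
      using x l lam by (intro mult_left_mono) (auto simp: u_def)
    moreover have "l * u * (2 * s) - u\<^sup>2 / s \<le> s ^ 3 * l\<^sup>2"
    proof -
      have "0 \<le> (u - l * s\<^sup>2)\<^sup>2 / s" using s by simp
      thus ?thesis using s by (simp add: field_simps power2_eq_square power3_eq_cube)
    qed
    ultimately show ?thesis unfolding lhs rhs by linarith
  qed
qed

definition tsallis_gap :: "nat \<Rightarrow> real \<Rightarrow> (nat \<Rightarrow> real) \<Rightarrow> (nat \<Rightarrow> real) \<Rightarrow> real" where
  "tsallis_gap K lam p Y = (SUP q\<in>simplex K. (\<Sum>a<K. (p a - q a) * (- Y a)) - lam * bregH K q p)"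

context
  fixes K :: nat and lam M :: real and p Y :: "nat \<Rightarrow> real"
  assumes p: "p \<in> simplex K" and lam: "0 \<le> lam" and Y_le: "\<And>a. a < K \<Longrightarrow> Y a \<le> M"
begin

lemma gap_term_le_linear:
  assumes q: "q \<in> simplex K"
  shows "(\<Sum>a<K. (p a - q a) * (- Y a)) - lam * bregH K q p \<le> (\<Sum>a<K. p a * (M - Y a))"
proof -
  have "(\<Sum>a<K. (p a - q a) * (- Y a)) = (\<Sum>a<K. p a * (M - Y a)) - (\<Sum>a<K. q a * (M - Y a))"
    using simplex_diff_sum_shift[OF p q, of M Y] by (simp add: left_diff_distrib sum_subtractf)
  moreover have "0 \<le> (\<Sum>a<K. q a * (M - Y a))"
    using Y_le simplex_nonneg[OF q] by (auto intro!: sum_nonneg)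
  moreover have "0 \<le> lam * bregH K q p"
    using lam bregH_nonneg simplex_nonneg[OF p] by simp
  ultimately show ?thesis by linarith
qed

lemma gap_term_le_local_norm:
  assumes q: "q \<in> simplex K" and lam_pos: "0 < lam"
  shows "lam * ((\<Sum>a<K. (p a - q a) * (- Y a)) - lam * bregH K q p)
      \<le> (\<Sum>a<K. p a * sqrt (p a) * (M - Y a)\<^sup>2)"
proof -
  have "lam * ((\<Sum>a<K. (p a - q a) * (- Y a)) - lam * bregH K q p)
      = (\<Sum>a<K. lam * ((p a - q a) * (M - Y a)) - lam\<^sup>2 * ((sqrt (q a) - sqrt (p a))\<^sup>2 / sqrt (p a)))"
    unfolding simplex_diff_sum_shift[OF p q, of M Y, symmetric] bregH_def
    by (simp only: right_diff_distrib sum_subtractf sum_distrib_left power2_eq_square mult.assoc)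
  also have "\<dots> \<le> (\<Sum>a<K. p a * sqrt (p a) * (M - Y a)\<^sup>2)"
    using simplex_nonneg[OF p] simplex_nonneg[OF q] Y_le lam_pos
    by (intro sum_mono local_norm_coord_bound) auto
  finally show ?thesis .
qed

lemma tsallis_gap_ge:
  assumes q: "q \<in> simplex K"
  shows "(\<Sum>a<K. (p a - q a) * (- Y a)) - lam * bregH K q p \<le> tsallis_gap K lam p Y"
  unfolding tsallis_gap_def
  by (rule cSUP_upper[OF q], rule bdd_aboveI2, rule gap_term_le_linear)

lemma tsallis_gap_nonneg: "0 \<le> tsallis_gap K lam p Y"
  using tsallis_gap_ge[OF p] by simp

lemma tsallis_gap_le:
  assumes "\<And>q. q \<in> simplex K \<Longrightarrow> (\<Sum>a<K. (p a - q a) * (- Y a)) - lam * bregH K q p \<le> B"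
  shows "tsallis_gap K lam p Y \<le> B"
  unfolding tsallis_gap_def using p assms by (intro cSUP_least) auto

lemma tsallis_gap_le_linear: "tsallis_gap K lam p Y \<le> (\<Sum>a<K. p a * (M - Y a))"
  by (intro tsallis_gap_le gap_term_le_linear)

lemma tsallis_gap_le_local_norm:
  assumes "0 < lam"
  shows "lam * tsallis_gap K lam p Y \<le> (\<Sum>a<K. p a * sqrt (p a) * (M - Y a)\<^sup>2)"
proof -
  have "tsallis_gap K lam p Y \<le> (\<Sum>a<K. p a * sqrt (p a) * (M - Y a)\<^sup>2) / lam"
    using gap_term_le_local_norm assms by (intro tsallis_gap_le) (simp add: field_simps)
  thus ?thesis using assms by (simp add: field_simps)
qed

end

section \<open>Adaptive FTRL along a fixed sequence of estimates\<close>

lemma le_of_square_le_affine: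
  fixes L A c :: real
  assumes "L\<^sup>2 \<le> A + c * L" "0 \<le> A" "0 \<le> c"
  shows "L \<le> c + sqrt A"
proof (cases "L \<le> c")
  case False
  hence "(L - c)\<^sup>2 \<le> L * (L - c)" using assms(3) by (simp add: power2_eq_square mult_right_mono)
  also have "\<dots> \<le> A" using assms(1) by (simp add: power2_eq_square algebra_simps)
  finally show ?thesis using real_le_rsqrt by force
qed (use real_sqrt_ge_zero[OF assms(2)] in linarith)

lemma sum_le_of_self_bounding:
  fixes d B :: "nat \<Rightarrow> real"
  assumes d: "\<And>s. s < T \<Longrightarrow> 0 \<le> d s \<and> d s \<le> c"
    and dB: "\<And>s. s < T \<Longrightarrow> (\<Sum>r<s. d r) * d s \<le> B s" and c: "0 \<le> c"
  shows "(\<Sum>s<T. d s) \<le> c + sqrt (2 * (\<Sum>s<T. B s))"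
proof (rule le_of_square_le_affine)
  have "(\<Sum>r<n. d r)\<^sup>2 \<le> 2 * (\<Sum>r<n. B r) + c * (\<Sum>r<n. d r)" if "n \<le> T" for n
    using that
  proof (induction n)
    case (Suc n)
    have "d n * d n \<le> c * d n" using d Suc.prems by (intro mult_right_mono) auto
    thus ?case using Suc dB[of n] by (simp add: power2_eq_square algebra_simps)
  qed simp
  thus "(\<Sum>s<T. d s)\<^sup>2 \<le> 2 * (\<Sum>s<T. B s) + c * (\<Sum>s<T. d s)" by simp
  have "0 \<le> B s" if s: "s < T" for s
  proof -
    have "0 \<le> (\<Sum>r<s. d r) * d s" using d s by (auto intro!: mult_nonneg_nonneg sum_nonneg)
    thus ?thesis using dB[OF s] by linarith
  qed
  thus "0 \<le> 2 * (\<Sum>s<T. B s)" by (auto intro: sum_nonneg)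
qed (rule c)

(* max - min of -H_(1/2) on the simplex: 2 sqrt K at the uniform distribution, 2 at a vertex. *)
definition tsallis_range :: "nat \<Rightarrow> real" where
  "tsallis_range K = 2 * (sqrt (real K) - 1)"

(* Raising lam to lam' cannot decrease the potential F + 2 sqrt K lam, as sum 2 sqrt q <= 2 sqrt K. *)
lemma tsallis_ftrl_step:
  assumes p: "p \<in> simplex K" and p': "p' \<in> simplex K"
    and min: "\<forall>q\<in>simplex K. tsallis_obj K L lam p \<le> tsallis_obj K L lam q"
    and lam: "0 \<le> lam" "lam \<le> lam'"
    and gap: "(\<Sum>a<K. (p a - p' a) * (- Y a)) - lam * bregH K p' p \<le> d"
  shows "tsallis_obj K L lam p + 2 * sqrt K * lam - (\<Sum>a<K. p a * Y a) - d
      \<le> tsallis_obj K (\<lambda>a. L a + Y a) lam' p' + 2 * sqrt K * lam'"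
proof -
  define G where "G = (\<Sum>a<K. sqrt (p' a))"
  have "tsallis_obj K L lam p + lam * bregH K p' p \<le> tsallis_obj K L lam p'"
    by (rule tsallis_minimizer_bregman[OF p min lam(1) p'])
  moreover have "(\<Sum>a<K. (p a - p' a) * (- Y a)) = (\<Sum>a<K. p' a * Y a) - (\<Sum>a<K. p a * Y a)"
    by (simp add: algebra_simps sum_subtractf)
  moreover have "0 \<le> (lam' - lam) * (sqrt K - G)"
    using lam sum_sqrt_simplex_le[OF p'] by (simp add: G_def)
  moreover have "tsallis_obj K (\<lambda>a. L a + Y a) lam' p'
      = tsallis_obj K L lam p' - (\<Sum>a<K. p' a * Y a) - 2 * (lam' - lam) * G"
    by (simp add: tsallis_obj_def G_def algebra_simps sum.distrib)
  ultimately show ?thesis using gap by (simp add: algebra_simps)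
qed

lemma tsallis_ftrl_regret:
  fixes p Y :: "nat \<Rightarrow> nat \<Rightarrow> real" and lam d :: "nat \<Rightarrow> real"
  assumes u: "u < K"
    and p: "\<And>n. n \<le> T \<Longrightarrow> p n \<in> simplex K"
    and min: "\<And>n q. n \<le> T \<Longrightarrow> q \<in> simplex K \<Longrightarrow>
      tsallis_obj K (\<lambda>a. \<Sum>r<n. Y r a) (lam n) (p n)
        \<le> tsallis_obj K (\<lambda>a. \<Sum>r<n. Y r a) (lam n) q"
    and lam: "\<And>n. n \<le> T \<Longrightarrow> 0 \<le> lam n"
    and mono: "\<And>n. n < T \<Longrightarrow> lam n \<le> lam (Suc n)"
    and gap: "\<And>n. n < T \<Longrightarrow>
      (\<Sum>a<K. (p n a - p (Suc n) a) * (- Y n a)) - lam n * bregH K (p (Suc n)) (p n) \<le> d n"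
  shows "(\<Sum>n<T. Y n u) - (\<Sum>n<T. \<Sum>a<K. p n a * Y n a) \<le> tsallis_range K * lam T + (\<Sum>n<T. d n)"
proof -
  define F where "F n = tsallis_obj K (\<lambda>a. \<Sum>r<n. Y r a) (lam n)" for n
  have potential: "- (\<Sum>r<n. \<Sum>a<K. p r a * Y r a) - (\<Sum>r<n. d r) \<le> F n (p n) + 2 * sqrt K * lam n"
    if "n \<le> T" for n
    using that
  proof (induction n)
    case 0
    have "2 * lam 0 * (\<Sum>a<K. sqrt (p 0 a)) \<le> 2 * lam 0 * sqrt K"
      using sum_sqrt_simplex_le[OF p] lam by (simp add: mult_left_mono)
    thus ?case by (simp add: F_def tsallis_obj_def algebra_simps)
  next
    case (Suc n)
    have "F n (p n) + 2 * sqrt K * lam n - (\<Sum>a<K. p n a * Y n a) - d n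
        \<le> F (Suc n) (p (Suc n)) + 2 * sqrt K * lam (Suc n)"
    proof -
      have n: "n < T" "n \<le> T" "Suc n \<le> T" using Suc.prems by auto
      have "\<forall>q\<in>simplex K. F n (p n) \<le> F n q" using min[OF n(2)] by (simp add: F_def)
      from tsallis_ftrl_step[OF p[OF n(2)] p[OF n(3)] this[unfolded F_def] lam[OF n(2)]
          mono[OF n(1)] gap[OF n(1)]]
      show ?thesis by (simp add: F_def)
    qed
    thus ?case using Suc by simp
  qed
  have "F T (p T) \<le> F T (\<lambda>a. if a = u then 1 else 0)"
    using min vertex_in_simplex[OF u] by (simp add: F_def)
  also have "\<dots> = - (\<Sum>r<T. Y r u) - 2 * lam T"
    using u by (simp add: F_def tsallis_obj_def if_distrib[of "\<lambda>x. x * _"] if_distrib[of sqrt] cong: if_cong)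
  finally show ?thesis using potential[of T] by (simp add: tsallis_range_def algebra_simps)
qed

section \<open>Expectations over action histories\<close>

definition history_prob :: "(nat list \<Rightarrow> nat \<Rightarrow> real) \<Rightarrow> nat list \<Rightarrow> real" where
  "history_prob P h = (\<Prod>s<length h. P (take s h) (h ! s))"

definition hist_expectation ::
    "(nat list \<Rightarrow> nat \<Rightarrow> real) \<Rightarrow> nat \<Rightarrow> nat \<Rightarrow> (nat list \<Rightarrow> real) \<Rightarrow> real" where
  "hist_expectation P K n f = (\<Sum>h\<in>histories K n. history_prob P h * f h)"

lemma histories_Suc: "histories K (Suc n) = (\<lambda>(h, a). h @ [a]) ` (histories K n \<times> {..<K})"
proof (intro equalityI subsetI)
  fix h' assume h': "h' \<in> histories K (Suc n)"
  hence "h' \<noteq> []" "set h' \<subseteq> {..<K}" by (auto simp: histories_def)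
  hence "h' = butlast h' @ [last h']" "butlast h' \<in> histories K n" "last h' < K"
    using h' last_in_set by (auto simp: histories_def dest: in_set_butlastD)
  thus "h' \<in> (\<lambda>(h, a). h @ [a]) ` (histories K n \<times> {..<K})"
    by (intro image_eqI[of _ _ "(butlast h', last h')"]) auto
qed (auto simp: histories_def)

lemma sum_histories_Suc:
  "(\<Sum>h\<in>histories K (Suc n). f h) = (\<Sum>h\<in>histories K n. \<Sum>a<K. f (h @ [a]))"
proof -
  have "inj_on (\<lambda>(h, a). h @ [a]) (histories K n \<times> {..<K})"
    by (auto simp: inj_on_def)
  thus ?thesis
    by (simp add: histories_Suc sum.reindex sum.cartesian_product case_prod_beta')
qed

lemma history_prob_snoc: "history_prob P (h @ [a]) = history_prob P h * P h a"
proof -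
  have "(\<Prod>s<length h. P (take s (h @ [a])) ((h @ [a]) ! s)) = history_prob P h"
    unfolding history_prob_def by (rule prod.cong) (auto simp: nth_append)
  thus ?thesis by (simp add: history_prob_def)
qed

lemma hist_expectation_Suc:
  "hist_expectation P K (Suc n) f = hist_expectation P K n (\<lambda>h. \<Sum>a<K. P h a * f (h @ [a]))"
  unfolding hist_expectation_def sum_histories_Suc history_prob_snoc
  by (simp add: sum_distrib_left mult.assoc)

lemma hist_expectation_add:
  "hist_expectation P K n (\<lambda>h. f h + g h) = hist_expectation P K n f + hist_expectation P K n g"
  by (simp add: hist_expectation_def algebra_simps sum.distrib)

lemma hist_expectation_diff:
  "hist_expectation P K n (\<lambda>h. f h - g h) = hist_expectation P K n f - hist_expectation P K n g"
  by (simp add: hist_expectation_def algebra_simps sum_subtractf)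

lemma hist_expectation_cmult:
  "hist_expectation P K n (\<lambda>h. c * f h) = c * hist_expectation P K n f"
  by (simp add: hist_expectation_def algebra_simps sum_distrib_left)

lemma hist_expectation_sum:
  "hist_expectation P K n (\<lambda>h. \<Sum>s\<in>S. f s h) = (\<Sum>s\<in>S. hist_expectation P K n (f s))"
  unfolding hist_expectation_def by (simp add: sum_distrib_left sum.swap[of _ S])

lemma hist_expectation_cong:
  "(\<And>h. h \<in> histories K n \<Longrightarrow> f h = g h)
    \<Longrightarrow> hist_expectation P K n f = hist_expectation P K n g"
  unfolding hist_expectation_def by (intro sum.cong) auto

locale simplex_policy =
  fixes P :: "nat list \<Rightarrow> nat \<Rightarrow> real" and K :: nat
  assumes policy_simplex: "\<And>h. set h \<subseteq> {..<K} \<Longrightarrow> P h \<in> simplex K"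
begin

lemma policy_take_simplex: "set h \<subseteq> {..<K} \<Longrightarrow> P (take n h) \<in> simplex K"
  using policy_simplex set_take_subset by fast

lemma history_prob_nonneg: "h \<in> histories K n \<Longrightarrow> 0 \<le> history_prob P h"
  unfolding history_prob_def
proof (intro prod_nonneg ballI)
  fix s assume "h \<in> histories K n" and s: "s \<in> {..<length h}"
  hence h: "set h \<subseteq> {..<K}" by (simp add: histories_def)
  hence "h ! s < K" using s by (auto dest: nth_mem)
  thus "0 \<le> P (take s h) (h ! s)" using policy_take_simplex[OF h] simplex_nonneg by blast
qed

lemma hist_expectation_mono:
  "(\<And>h. h \<in> histories K n \<Longrightarrow> f h \<le> g h)
    \<Longrightarrow> hist_expectation P K n f \<le> hist_expectation P K n g"
  unfolding hist_expectation_def by (intro sum_mono mult_left_mono) (auto simp: history_prob_nonneg)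

lemma hist_expectation_const [simp]: "hist_expectation P K n (\<lambda>_. c) = c"
proof -
  have "hist_expectation P K n (\<lambda>_. 1) = 1"
  proof (induction n)
    case 0
    have "histories K 0 = {[]}" by (auto simp: histories_def)
    thus ?case by (simp add: hist_expectation_def history_prob_def)
  next
    case (Suc n)
    have "hist_expectation P K n (\<lambda>h. \<Sum>a<K. P h a) = hist_expectation P K n (\<lambda>_. 1)"
      by (rule hist_expectation_cong) (simp add: histories_def policy_simplex simplex_sum)
    thus ?case using Suc by (simp add: hist_expectation_Suc)
  qed
  thus ?thesis using hist_expectation_cmult[of P K n c "\<lambda>_. 1"] by simp
qed

lemma hist_expectation_take:
  "k \<le> n \<Longrightarrow> hist_expectation P K n (\<lambda>h. f (take k h)) = hist_expectation P K k f"
proof (induction n rule: dec_induct)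
  case base
  show ?case by (rule hist_expectation_cong) (simp add: histories_def)
next
  case (step n)
  have "hist_expectation P K n (\<lambda>h. \<Sum>a<K. P h a * f (take k (h @ [a])))
      = hist_expectation P K n (\<lambda>h. f (take k h))"
  proof (rule hist_expectation_cong)
    fix h assume h: "h \<in> histories K n"
    hence "(\<Sum>a<K. P h a * f (take k (h @ [a]))) = (\<Sum>a<K. P h a) * f (take k h)"
      using step by (simp add: histories_def sum_distrib_right)
    thus "(\<Sum>a<K. P h a * f (take k (h @ [a]))) = f (take k h)"
      using h by (simp add: histories_def policy_simplex simplex_sum)
  qed
  thus ?case using step by (simp add: hist_expectation_Suc)
qed

lemma hist_expectation_prefix:
  assumes "k \<le> n" and "\<And>h. f (take k h) = f h"
  shows "hist_expectation P K n f = hist_expectation P K k f"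
  using hist_expectation_take[OF assms(1), of f] assms(2) by simp

lemma hist_expectation_sqrt_le:
  assumes f: "\<And>h. h \<in> histories K n \<Longrightarrow> 0 \<le> f h"
  shows "hist_expectation P K n (\<lambda>h. sqrt (f h)) \<le> sqrt (hist_expectation P K n f)"
proof (rule real_le_rsqrt)
  let ?w = "history_prob P" and ?H = "histories K n"
  have "hist_expectation P K n (\<lambda>h. sqrt (f h)) = (\<Sum>h\<in>?H. sqrt (?w h) * sqrt (?w h * f h))"
    unfolding hist_expectation_def
  proof (rule sum.cong)
    fix h assume "h \<in> ?H"
    hence "sqrt (?w h) * sqrt (?w h) = ?w h" using history_prob_nonneg by simp
    thus "?w h * sqrt (f h) = sqrt (?w h) * sqrt (?w h * f h)"
      by (simp add: real_sqrt_mult mult.assoc[symmetric])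
  qed simp
  hence "(hist_expectation P K n (\<lambda>h. sqrt (f h)))\<^sup>2
      \<le> (\<Sum>h\<in>?H. (sqrt (?w h))\<^sup>2) * (\<Sum>h\<in>?H. (sqrt (?w h * f h))\<^sup>2)"
    using Cauchy_Schwarz_ineq_sum by metis
  also have "\<dots> = hist_expectation P K n (\<lambda>_. 1) * hist_expectation P K n f"
    unfolding hist_expectation_def
    by (intro arg_cong2[where f = "(*)"] sum.cong) (simp_all add: history_prob_nonneg f)
  finally show "(hist_expectation P K n (\<lambda>h. sqrt (f h)))\<^sup>2 \<le> hist_expectation P K n f"
    by simp
qed

end

section \<open>The AdaFTRL run\<close>

(* p A * (c / p A) is c, or 0 if p A = 0. *)
lemma sum_importance_weighted:
  assumes p: "p \<in> simplex K" and A: "A < K"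
  shows "(\<Sum>a<K. p a * ((if a = A then c / p a else 0) + M)) = M + p A * (c / p A)"
proof -
  have "(\<Sum>a<K. p a * ((if a = A then c / p a else 0) + M))
      = (\<Sum>a<K. (if a = A then p A * (c / p A) else 0) + M * p a)"
    by (rule sum.cong) (auto simp: algebra_simps)
  thus ?thesis using A simplex_sum[OF p] by (simp add: sum.distrib flip: sum_distrib_left)
qed

lemma yhat_take:
  assumes "1 \<le> s" "s \<le> k"
  shows "yhat P M y (take k h) s a = yhat P M y h s a"
proof -
  have "take k h ! (s - 1) = h ! (s - 1)" "take (s - 1) (take k h) = take (s - 1) h"
    using assms by (auto simp: min_def)
  thus ?thesis by (simp add: yhat_def)
qed

lemma yhat_snoc:
  "yhat P M y (h @ [a]) (Suc (length h)) u = (if u = a then (y (Suc (length h)) u - M) / P h u else 0) + M"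
  by (simp add: yhat_def)

lemma invlr_take: "n \<le> k \<Longrightarrow> invlr P K M y (take k h) n = invlr P K M y h n"
  by (induction n) (simp_all add: min_def)

lemma deltaL_take:
  assumes "s < length h"
  shows "deltaL P K M y lam (take (Suc s) h) = tsallis_gap K lam (P (take s h)) (yhat P M y h (Suc s))"
proof -
  have "yhat P M y (take (Suc s) h) (Suc s) = yhat P M y h (Suc s)"
    by (rule ext, rule yhat_take) auto
  thus ?thesis using assms by (simp add: deltaL_def tsallis_gap_def butlast_take)
qed

lemma ftrl_obj_take:
  assumes "n \<le> length h"
  shows "ftrl_obj P K M y (take n h)
    = tsallis_obj K (\<lambda>a. \<Sum>r<n. yhat P M y h (Suc r) a) (invlr P K M y h n)"
proof -
  have "(\<Sum>r=1..n. yhat P M y (take n h) r a) = (\<Sum>r<n. yhat P M y h (Suc r) a)" for a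
    by (simp add: sum.atLeast1_atMost_eq yhat_take)
  thus ?thesis using assms invlr_take[of n n P K M y h]
    by (simp add: ftrl_obj_def tsallis_obj_def sum_distrib_left fun_eq_iff ac_simps)
qed

locale adaftrl_run =
  fixes P :: "nat list \<Rightarrow> nat \<Rightarrow> real" and K :: nat and m M :: real
    and y :: "nat \<Rightarrow> nat \<Rightarrow> real"
  assumes two_arms: "K \<ge> 2" and m_le_M: "m \<le> M"
    and reward_bounds: "\<And>t a. t \<ge> 1 \<Longrightarrow> a < K \<Longrightarrow> m \<le> y t a \<and> y t a \<le> M"
    and run: "adaftrl P K M y"
begin

definition local_norm :: "nat list \<Rightarrow> nat \<Rightarrow> real" where
  "local_norm h s
     = (\<Sum>a<K. P (take s h) a * sqrt (P (take s h) a) * (M - yhat P M y h (Suc s) a)\<^sup>2)"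

definition estimate_regret :: "nat \<Rightarrow> nat \<Rightarrow> nat list \<Rightarrow> real" where
  "estimate_regret T u h = (\<Sum>s<T. yhat P M y h (Suc s) u)
     - (\<Sum>s<T. \<Sum>a<K. P (take s h) a * yhat P M y h (Suc s) a)"

lemma tsallis_range_pos: "0 < tsallis_range K"
  using two_arms by (simp add: tsallis_range_def)

sublocale simplex_policy P K
proof
  fix h :: "nat list" assume "set h \<subseteq> {..<K}"
  thus "P h \<in> simplex K"
  proof (cases h)
    case Nil
    have "(\<Sum>a<K. P [] a) = 1" using run two_arms by (simp add: adaftrl_def)
    thus ?thesis using Nil run by (simp add: adaftrl_def simplex_def)
  qed (use run in \<open>simp add: adaftrl_def\<close>)
qed

context
  fixes h :: "nat list" and s :: nat
  assumes h: "set h \<subseteq> {..<K}" and s: "s < length h"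
begin

lemma yhat_le: "a < K \<Longrightarrow> yhat P M y h (Suc s) a \<le> M"
  using reward_bounds[of "Suc s" a] simplex_nonneg[OF policy_take_simplex[OF h]]
  by (auto simp: yhat_def divide_nonpos_nonneg)

lemma sum_policy_yhat:
  "(\<Sum>a<K. P (take s h) a * yhat P M y h (Suc s) a)
     = M + P (take s h) (h ! s) * ((y (Suc s) (h ! s) - M) / P (take s h) (h ! s))"
proof -
  have "h ! s < K" using h s by (auto dest: nth_mem)
  moreover have "yhat P M y h (Suc s) a = (if a = h ! s then (y (Suc s) (h ! s) - M) / P (take s h) a else 0) + M" for a
    by (simp add: yhat_def)
  ultimately show ?thesis using sum_importance_weighted[OF policy_take_simplex[OF h]] by simp
qed

lemma sum_policy_gap_le: "(\<Sum>a<K. P (take s h) a * (M - yhat P M y h (Suc s) a)) \<le> M - m"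
proof -
  have "h ! s < K" using h s by (auto dest: nth_mem)
  hence "P (take s h) (h ! s) * ((y (Suc s) (h ! s) - M) / P (take s h) (h ! s)) \<ge> m - M"
    using reward_bounds[of "Suc s" "h ! s"] m_le_M by (cases "P (take s h) (h ! s) = 0") auto
  moreover have "(\<Sum>a<K. P (take s h) a * (M - yhat P M y h (Suc s) a))
      = M - (\<Sum>a<K. P (take s h) a * yhat P M y h (Suc s) a)"
    using simplex_sum[OF policy_take_simplex[OF h]]
    by (simp add: right_diff_distrib sum_subtractf flip: sum_distrib_right)
  ultimately show ?thesis using sum_policy_yhat by simp
qed

context
  fixes lam :: real
  assumes lam: "0 \<le> lam"
begin

lemma deltaL_nonneg: "0 \<le> deltaL P K M y lam (take (Suc s) h)"
  unfolding deltaL_take[OF s] by (rule tsallis_gap_nonneg[OF policy_take_simplex[OF h] lam yhat_le])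

lemma deltaL_le: "deltaL P K M y lam (take (Suc s) h) \<le> M - m"
proof -
  have "tsallis_gap K lam (P (take s h)) (yhat P M y h (Suc s))
      \<le> (\<Sum>a<K. P (take s h) a * (M - yhat P M y h (Suc s) a))"
    by (rule tsallis_gap_le_linear[OF policy_take_simplex[OF h] lam]) (rule yhat_le)
  thus ?thesis unfolding deltaL_take[OF s] using sum_policy_gap_le by linarith
qed

lemma deltaL_ge:
  "q \<in> simplex K \<Longrightarrow>
    (\<Sum>a<K. (P (take s h) a - q a) * (- yhat P M y h (Suc s) a)) - lam * bregH K q (P (take s h))
      \<le> deltaL P K M y lam (take (Suc s) h)"
  unfolding deltaL_take[OF s] by (rule tsallis_gap_ge[OF policy_take_simplex[OF h] lam yhat_le])

lemma deltaL_local_norm: "0 < lam \<Longrightarrow> lam * deltaL P K M y lam (take (Suc s) h) \<le> local_norm h s"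
  unfolding deltaL_take[OF s] local_norm_def
  by (rule tsallis_gap_le_local_norm[OF policy_take_simplex[OF h] lam yhat_le])

end

end

lemma local_norm_nonneg: "set h \<subseteq> {..<K} \<Longrightarrow> 0 \<le> local_norm h s"
  unfolding local_norm_def using simplex_nonneg[OF policy_take_simplex] by (auto intro!: sum_nonneg)

lemma invlr_Suc_eq:
  "invlr P K M y h (Suc n)
     = invlr P K M y h n + deltaL P K M y (invlr P K M y h n) (take (Suc n) h) / tsallis_range K"
  by (simp add: tsallis_range_def)

lemma invlr_nonneg: "set h \<subseteq> {..<K} \<Longrightarrow> n \<le> length h \<Longrightarrow> 0 \<le> invlr P K M y h n"
proof (induction n)
  case (Suc n)
  thus ?case using deltaL_nonneg[of h n "invlr P K M y h n"] tsallis_range_pos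
    by (simp add: invlr_Suc_eq del: invlr.simps(2))
qed simp

lemma invlr_mono:
  "set h \<subseteq> {..<K} \<Longrightarrow> n < length h \<Longrightarrow> invlr P K M y h n \<le> invlr P K M y h (Suc n)"
  using deltaL_nonneg[of h n "invlr P K M y h n"] invlr_nonneg[of h n] tsallis_range_pos
  by (simp add: invlr_Suc_eq del: invlr.simps(2))

lemma invlr_eq_sum_deltaL:
  "tsallis_range K * invlr P K M y h n = (\<Sum>s<n. deltaL P K M y (invlr P K M y h s) (take (Suc s) h))"
proof (induction n)
  case (Suc n)
  thus ?case using tsallis_range_pos
    by (simp add: invlr_Suc_eq distrib_left del: invlr.simps(2))
qed simp

lemma policy_minimizes:
  assumes h: "set h \<subseteq> {..<K}" and n: "n \<le> length h" and q: "q \<in> simplex K"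
  shows "tsallis_obj K (\<lambda>a. \<Sum>r<n. yhat P M y h (Suc r) a) (invlr P K M y h n) (P (take n h))
      \<le> tsallis_obj K (\<lambda>a. \<Sum>r<n. yhat P M y h (Suc r) a) (invlr P K M y h n) q"
proof (cases "n = 0")
  case True
  thus ?thesis by (simp add: tsallis_obj_def)
next
  case False
  have "set (take n h) \<subseteq> {..<K}" "1 \<le> length (take n h)"
    using h n False set_take_subset by (fastforce, simp)
  hence "ftrl_obj P K M y (take n h) (P (take n h)) \<le> ftrl_obj P K M y (take n h) q"
    using run q by (simp add: adaftrl_def)
  thus ?thesis by (simp add: ftrl_obj_take[OF n])
qed

context
  fixes h :: "nat list" and T :: nat
  assumes h: "h \<in> histories K T"
begin

lemma estimate_regret_le_invlr:
  assumes u: "u < K"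
  shows "estimate_regret T u h \<le> 2 * (tsallis_range K * invlr P K M y h T)"
proof -
  have hs: "set h \<subseteq> {..<K}" and lh: "length h = T" using h by (auto simp: histories_def)
  have "estimate_regret T u h
      \<le> tsallis_range K * invlr P K M y h T
        + (\<Sum>s<T. deltaL P K M y (invlr P K M y h s) (take (Suc s) h))"
    unfolding estimate_regret_def using lh
    by (intro tsallis_ftrl_regret[OF u] policy_take_simplex[OF hs] policy_minimizes[OF hs]
        invlr_nonneg[OF hs] invlr_mono[OF hs] deltaL_ge[OF hs] invlr_nonneg[OF hs]
        policy_take_simplex[OF hs]) auto
  thus ?thesis using invlr_eq_sum_deltaL[of h T] by simp
qed

lemma path_invlr_le:
  "tsallis_range K * invlr P K M y h T
     \<le> (M - m) + sqrt (2 * (\<Sum>s<T. tsallis_range K * local_norm h s))"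
proof -
  have hs: "set h \<subseteq> {..<K}" and lh: "length h = T" using h by (auto simp: histories_def)
  define d where "d s = deltaL P K M y (invlr P K M y h s) (take (Suc s) h)" for s
  have "(\<Sum>s<T. d s) \<le> (M - m) + sqrt (2 * (\<Sum>s<T. tsallis_range K * local_norm h s))"
  proof (rule sum_le_of_self_bounding)
    fix s assume s: "s < T"
    hence s': "s < length h" using lh by simp
    have lam: "0 \<le> invlr P K M y h s" using invlr_nonneg[OF hs] s' by simp
    show "0 \<le> d s \<and> d s \<le> M - m"
      unfolding d_def using deltaL_nonneg[OF hs s' lam] deltaL_le[OF hs s' lam] by simp
    have "invlr P K M y h s * d s \<le> local_norm h s"
    proof (cases "invlr P K M y h s = 0")
      case False
      thus ?thesis unfolding d_def using deltaL_local_norm[OF hs s' lam] lam by simp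
    qed (simp add: local_norm_nonneg[OF hs])
    hence "tsallis_range K * (invlr P K M y h s * d s) \<le> tsallis_range K * local_norm h s"
      using tsallis_range_pos by (intro mult_left_mono) auto
    moreover have "(\<Sum>r<s. d r) = tsallis_range K * invlr P K M y h s"
      using invlr_eq_sum_deltaL[of h s] by (simp add: d_def)
    ultimately show "(\<Sum>r<s. d r) * d s \<le> tsallis_range K * local_norm h s"
      by (simp add: mult.assoc)
  qed (use m_le_M in simp)
  thus ?thesis using invlr_eq_sum_deltaL[of h T] by (simp add: d_def)
qed

lemma estimate_regret_le:
  assumes u: "u < K"
  shows "estimate_regret T u h
      \<le> 2 * (M - m) + 2 * sqrt (2 * tsallis_range K * (\<Sum>s<T. local_norm h s))"
  using estimate_regret_le_invlr[OF u] path_invlr_le by (simp add: sum_distrib_left mult.assoc)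

end

(* Unbiased when the arm has positive probability; otherwise the estimate is the constant M,
  because division by 0 gives 0. *)
lemma expected_yhat_ge:
  assumes s: "s < T" and u: "u < K"
  shows "y (Suc s) u \<le> hist_expectation P K T (\<lambda>h. yhat P M y h (Suc s) u)"
proof -
  have "y (Suc s) u \<le> hist_expectation P K s (\<lambda>h. \<Sum>a<K. P h a * yhat P M y (h @ [a]) (Suc s) u)"
  proof (subst hist_expectation_const[symmetric], rule hist_expectation_mono)
    fix h assume h: "h \<in> histories K s"
    hence "yhat P M y (h @ [a]) (Suc s) u = (if a = u then (y (Suc s) u - M) / P h a else 0) + M" for a
      using yhat_snoc[of P M y h a u] by (auto simp: histories_def)
    hence "(\<Sum>a<K. P h a * yhat P M y (h @ [a]) (Suc s) u) = M + P h u * ((y (Suc s) u - M) / P h u)"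
      using sum_importance_weighted[OF policy_simplex u] h by (simp add: histories_def)
    thus "y (Suc s) u \<le> (\<Sum>a<K. P h a * yhat P M y (h @ [a]) (Suc s) u)"
      using reward_bounds[of "Suc s" u] u by (cases "P h u = 0") auto
  qed
  also have "\<dots> = hist_expectation P K (Suc s) (\<lambda>h. yhat P M y h (Suc s) u)"
    by (rule hist_expectation_Suc[symmetric])
  also have "\<dots> = hist_expectation P K T (\<lambda>h. yhat P M y h (Suc s) u)"
    by (rule hist_expectation_prefix[symmetric]) (use s in \<open>auto intro: yhat_take\<close>)
  finally show ?thesis .
qed

lemma local_norm_snoc:
  assumes "length h = s" and a: "a < K"
  shows "local_norm (h @ [a]) s = P h a * sqrt (P h a) * ((y (Suc s) a - M) / P h a)\<^sup>2"
proof -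
  have "local_norm (h @ [a]) s
      = (\<Sum>c<K. if c = a then P h a * sqrt (P h a) * ((y (Suc s) a - M) / P h a)\<^sup>2 else 0)"
    unfolding local_norm_def
    by (rule sum.cong) (use assms yhat_snoc[of P M y h a] in \<open>auto simp: power2_commute\<close>)
  thus ?thesis using a by simp
qed

lemma expected_local_norm_le:
  assumes s: "s < T"
  shows "hist_expectation P K T (\<lambda>h. local_norm h s) \<le> (M - m)\<^sup>2 * sqrt K"
proof -
  have "hist_expectation P K T (\<lambda>h. local_norm h s) = hist_expectation P K (Suc s) (\<lambda>h. local_norm h s)"
    by (rule hist_expectation_prefix) (use s in \<open>auto simp: local_norm_def yhat_take\<close>)
  also have "\<dots> = hist_expectation P K s (\<lambda>h. \<Sum>a<K. P h a * local_norm (h @ [a]) s)"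
    by (rule hist_expectation_Suc)
  also have "\<dots> \<le> hist_expectation P K s (\<lambda>_. (M - m)\<^sup>2 * sqrt K)"
  proof (rule hist_expectation_mono)
    fix h assume h: "h \<in> histories K s"
    hence p: "P h \<in> simplex K" and lh: "length h = s"
      using policy_simplex by (auto simp: histories_def)
    have "P h a * local_norm (h @ [a]) s \<le> (M - m)\<^sup>2 * sqrt (P h a)" if a: "a < K" for a
    proof (cases "P h a = 0")
      case False
      have "(y (Suc s) a - M)\<^sup>2 \<le> (M - m)\<^sup>2"
        using reward_bounds[of "Suc s" a] a by (simp add: power2_commute[of _ M] power_mono)
      hence "sqrt (P h a) * (y (Suc s) a - M)\<^sup>2 \<le> sqrt (P h a) * (M - m)\<^sup>2"
        using simplex_nonneg[OF p a] by (intro mult_left_mono) auto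
      moreover have "P h a * local_norm (h @ [a]) s = sqrt (P h a) * (y (Suc s) a - M)\<^sup>2"
        using False by (simp add: local_norm_snoc[OF lh a] power2_eq_square field_simps)
      ultimately show ?thesis by (simp add: mult.commute)
    qed (simp add: local_norm_snoc[OF lh a])
    hence "(\<Sum>a<K. P h a * local_norm (h @ [a]) s) \<le> (\<Sum>a<K. (M - m)\<^sup>2 * sqrt (P h a))"
      by (intro sum_mono) auto
    also have "\<dots> = (M - m)\<^sup>2 * (\<Sum>a<K. sqrt (P h a))"
      by (simp add: sum_distrib_left)
    also have "\<dots> \<le> (M - m)\<^sup>2 * sqrt K"
      using sum_sqrt_simplex_le[OF p] by (intro mult_left_mono) auto
    finally show "(\<Sum>a<K. P h a * local_norm (h @ [a]) s) \<le> (M - m)\<^sup>2 * sqrt K" .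
  qed
  finally show ?thesis by simp
qed

(* On a history of positive probability every played arm had positive probability, so the
  estimate is exact on it. *)
lemma exp_reward_eq:
  "exp_reward P K y T
     = hist_expectation P K T (\<lambda>h. \<Sum>s<T. \<Sum>a<K. P (take s h) a * yhat P M y h (Suc s) a)"
  unfolding exp_reward_def hist_expectation_def
proof (rule sum.cong[OF refl])
  fix h assume h: "h \<in> histories K T"
  hence hs: "set h \<subseteq> {..<K}" and lh: "length h = T" by (auto simp: histories_def)
  show "(\<Prod>s<T. P (take s h) (h ! s)) * (\<Sum>s<T. y (Suc s) (h ! s))
      = history_prob P h * (\<Sum>s<T. \<Sum>a<K. P (take s h) a * yhat P M y h (Suc s) a)"
  proof (cases "history_prob P h = 0")
    case False
    hence "P (take s h) (h ! s) \<noteq> 0" if "s < T" for s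
      using that lh by (auto simp: history_prob_def)
    hence "(\<Sum>a<K. P (take s h) a * yhat P M y h (Suc s) a) = y (Suc s) (h ! s)" if "s < T" for s
      using sum_policy_yhat[OF hs, of s] that lh by simp
    thus ?thesis using lh by (simp add: history_prob_def)
  qed (use lh in \<open>simp add: history_prob_def\<close>)
qed

lemma regret_le_expected_estimate_regret:
  assumes u: "u < K" and best: "(MAX a\<in>{..<K}. \<Sum>t=1..T. y t a) = (\<Sum>t=1..T. y t u)"
  shows "regret P K y T \<le> hist_expectation P K T (estimate_regret T u)"
proof -
  have "(\<Sum>t=1..T. y t u) = (\<Sum>s<T. y (Suc s) u)" by (simp add: sum.atLeast1_atMost_eq)
  also have "\<dots> \<le> (\<Sum>s<T. hist_expectation P K T (\<lambda>h. yhat P M y h (Suc s) u))"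
    using expected_yhat_ge u by (intro sum_mono) auto
  finally show ?thesis
    unfolding regret_def best exp_reward_eq estimate_regret_def
    by (simp add: hist_expectation_diff flip: hist_expectation_sum)
qed

lemma expected_sum_local_norm_le:
  "hist_expectation P K T (\<lambda>h. 2 * tsallis_range K * (\<Sum>s<T. local_norm h s))
     \<le> (2 * (M - m))\<^sup>2 * (real K * real T)"
proof -
  have "hist_expectation P K T (\<lambda>h. 2 * tsallis_range K * (\<Sum>s<T. local_norm h s))
      = 2 * tsallis_range K * (\<Sum>s<T. hist_expectation P K T (\<lambda>h. local_norm h s))"
    by (simp add: hist_expectation_cmult hist_expectation_sum)
  also have "\<dots> \<le> 2 * tsallis_range K * (T * ((M - m)\<^sup>2 * sqrt K))"
    using expected_local_norm_le tsallis_range_pos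
    by (intro mult_left_mono) (auto intro: sum_bounded_above[where A = "{..<T}", simplified])
  also have "\<dots> \<le> 2 * (2 * sqrt K) * (T * ((M - m)\<^sup>2 * sqrt K))"
    by (intro mult_right_mono mult_left_mono) (auto simp: tsallis_range_def)
  also have "\<dots> = (2 * (M - m))\<^sup>2 * (real K * real T)"
  proof -
    have "2 * (2 * r) * (T * ((M - m)\<^sup>2 * r)) = (2 * (M - m))\<^sup>2 * (r * r * T)" for r :: real
      by (simp add: power2_eq_square algebra_simps)
    from this[of "sqrt K"] show ?thesis by simp
  qed
  finally show ?thesis .
qed

end

theorem theorem9:
  fixes K T :: nat and m M :: real and y :: "nat \<Rightarrow> nat \<Rightarrow> real"
    and P :: "nat list \<Rightarrow> nat \<Rightarrow> real"
  assumes "K \<ge> 2"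
    and "m \<le> M"
    and "\<And>t a. t \<ge> 1 \<Longrightarrow> a < K \<Longrightarrow> m \<le> y t a \<and> y t a \<le> M"
    and "T \<ge> 1"
    and "adaftrl P K M y"
  shows "regret P K y T \<le> 4 * (M - m) * sqrt (real K * real T) + 2 * (M - m)"
proof -
  \<comment> \<open>The bound also holds for T = 0.\<close>
  interpret adaftrl_run P K m M y using assms(1-3,5) by unfold_locales
  define V where "V h = 2 * tsallis_range K * (\<Sum>s<T. local_norm h s)" for h
  have "(MAX a\<in>{..<K}. \<Sum>t=1..T. y t a) \<in> (\<lambda>a. \<Sum>t=1..T. y t a) ` {..<K}"
    using assms(1) by (intro Max_in) (auto simp: lessThan_empty_iff)
  then obtain u where u: "u < K" and best: "(MAX a\<in>{..<K}. \<Sum>t=1..T. y t a) = (\<Sum>t=1..T. y t u)"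
    by auto
  have V_nonneg: "0 \<le> V h" if "h \<in> histories K T" for h
    using that local_norm_nonneg tsallis_range_pos
    by (auto simp: V_def histories_def intro!: mult_nonneg_nonneg sum_nonneg)
  have "regret P K y T \<le> hist_expectation P K T (estimate_regret T u)"
    by (rule regret_le_expected_estimate_regret[OF u best])
  also have "\<dots> \<le> hist_expectation P K T (\<lambda>h. 2 * (M - m) + 2 * sqrt (V h))"
    unfolding V_def using estimate_regret_le[OF _ u] by (rule hist_expectation_mono)
  also have "\<dots> \<le> 2 * (M - m) + 2 * sqrt (hist_expectation P K T V)"
    using hist_expectation_sqrt_le[of T V, OF V_nonneg]
    by (simp add: hist_expectation_add hist_expectation_cmult)
  also have "sqrt (hist_expectation P K T V) \<le> sqrt ((2 * (M - m))\<^sup>2 * (real K * real T))"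
    using expected_sum_local_norm_le unfolding V_def by simp
  also have "\<dots> = 2 * (M - m) * sqrt (real K * real T)"
    using assms(2) by (simp add: real_sqrt_mult)
  finally show ?thesis by (simp add: algebra_simps)
qed

end
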